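(* Let $q_1=(\mathbf A_1,\mathbf b_1),q_2=(\mathbf A_2,\mathbf b_2)\in Q$ be distinct points such that the line $q_1q_2$ is horizontal. Then the projected pair of 2-gons, with vertices $A_1=[\mathbf A_1],A_2=[\mathbf A_2]$ and edges $b_1=[\mathbf b_1],b_2=[\mathbf b_2]$, is inscribed, i.e., the point $b_1\cap b_2$ lies on the line $A_1A_2$. Conversely, every inscribed pair of 2-gons (points $A_1\neq A_2$, lines $b_1\neq b_2$ with $b_1\cap b_2\in A_1A_2$) with $A_i\notin b_i$ for $i=1,2$ lifts to a unique horizontal 2-gon in $Q$, i.e., there are unique $(\mathbf A_i,\mathbf b_i)\in Q$ with $[\mathbf A_i]=A_i$, $[\mathbf b_i]=b_i$ and the line through them horizontal.
   Context: $Q:=\{(\mathbf A,\mathbf b)\in\mathbb R^3\times(\mathbb R^3)^*:\mathbf b\mathbf A=1\}$ ($\mathbf A$ column, $\mathbf b$ row). For $\mathbf A,\mathbf A'\in\mathbb R^3$, $\mathbf A\times\mathbf A':=\det(\mathbf A,\mathbf A',\cdot)\in(\mathbb R^3)^*$. The distribution $\mathscr D$ on $Q$ at $(\mathbf A,\mathbf b)$ consists of vectors $(\dot{\mathbf A},\dot{\mathbf b})$ with $\dot{\mathbf b}\mathbf A+\mathbf b\dot{\mathbf A}=0$ and $\dot{\mathbf b}=\mathbf A\times\dot{\mathbf A}$. A line is horizontal if it is an affine line contained in $Q$ and everywhere tangent to $\mathscr D$. $[\mathbf A]\in\mathbb{RP}^2$ is the point with homogeneous coordinates $\mathbf A$;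 $[\mathbf b]$ is the line $\{X:\mathbf bX=0\}$. *)

theory Defs
  imports "HOL-Analysis.Analysis"
begin

text \<open>Column vectors A and row vectors (covectors) b of R^3 are both modelled as real^3;
  the pairing b A is the inner product b \<bullet> A.\<close>

definition det3 :: "real^3 \<Rightarrow> real^3 \<Rightarrow> real^3 \<Rightarrow> real" where
  "det3 A B C = det (transpose (vector [A, B, C] :: real^3^3))"

definition cross_form :: "real^3 \<Rightarrow> real^3 \<Rightarrow> real^3" where
  "cross_form A A' = (\<chi> i. det3 A A' (axis i 1))"

definition in_Q :: "real^3 \<Rightarrow> real^3 \<Rightarrow> bool" where
  "in_Q A b \<longleftrightarrow> b \<bullet> A = 1"

definition in_D :: "real^3 \<Rightarrow> real^3 \<Rightarrow> real^3 \<Rightarrow> real^3 \<Rightarrow> bool" where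
  "in_D A b dA db \<longleftrightarrow> db \<bullet> A + b \<bullet> dA = 0 \<and> db = cross_form A dA"

text \<open>The affine line through two distinct points (A1,b1), (A2,b2) is horizontal:
  contained in Q and everywhere tangent to D (its tangent direction is the difference).\<close>
definition horizontal_line :: "real^3 \<Rightarrow> real^3 \<Rightarrow> real^3 \<Rightarrow> real^3 \<Rightarrow> bool" where
  "horizontal_line A1 b1 A2 b2 \<longleftrightarrow> (A1, b1) \<noteq> (A2, b2) \<and>
     (\<forall>t::real. in_Q (A1 + t *\<^sub>R (A2 - A1)) (b1 + t *\<^sub>R (b2 - b1)) \<and>
                in_D (A1 + t *\<^sub>R (A2 - A1)) (b1 + t *\<^sub>R (b2 - b1)) (A2 - A1) (b2 - b1))"

definition proj_eq :: "real^3 \<Rightarrow> real^3 \<Rightarrow> bool" where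
  "proj_eq u v \<longleftrightarrow> u \<noteq> 0 \<and> v \<noteq> 0 \<and> (\<exists>c. c \<noteq> 0 \<and> v = c *\<^sub>R u)"

definition inscribed :: "real^3 \<Rightarrow> real^3 \<Rightarrow> real^3 \<Rightarrow> real^3 \<Rightarrow> bool" where
  "inscribed a1 a2 c1 c2 \<longleftrightarrow> a1 \<noteq> 0 \<and> a2 \<noteq> 0 \<and> c1 \<noteq> 0 \<and> c2 \<noteq> 0 \<and>
     \<not> proj_eq a1 a2 \<and> \<not> proj_eq c1 c2 \<and>
     (\<forall>X. X \<noteq> 0 \<and> c1 \<bullet> X = 0 \<and> c2 \<bullet> X = 0 \<longrightarrow> det3 a1 a2 X = 0)"

end

theory Submission
  imports Defs "HOL-Analysis.Cross3"
begin

(* The line through (A1, b1) and (A2, b2) is horizontal exactly when all four pairings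
   b_i A_j equal 1 and b2 - b1 = A1 x A2.  The last condition says that b2 - b1, and hence
   det(A1, A2, .), vanishes at the intersection point of b1 and b2: the 2-gons are inscribed.
   Conversely, inscribedness puts a1 x a2 into the span of c1, c2, say a1 x a2 = alpha c1 + beta c2.
   For a candidate lift A_i = t_i a_i, b_i = u_i c_i the cross-product condition forces
   u1 = -t1 t2 alpha and u2 = t1 t2 beta, and the pairing conditions then reduce to
   t2 = t1 (c1 a1) / (c1 a2) together with a real cubic t1^3 = K, which has exactly one root. *)

unbundle cross3_syntax

lemma cross_form_eq_cross3: "cross_form A B = A \<times> B"
  unfolding cross_form_def det3_def det_transpose
  by (simp add: cross3_simps axis_def forall_3 det_3)

lemma det3_eq_inner_cross3: "det3 A B C = (A \<times> B) \<bullet> C"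
  unfolding det3_def det_transpose by (simp add: cross3_simps det_3)

lemma horizontal_line_iff:
  "horizontal_line A1 b1 A2 b2 \<longleftrightarrow> (A1, b1) \<noteq> (A2, b2) \<and>
     b1 \<bullet> A1 = 1 \<and> b1 \<bullet> A2 = 1 \<and> b2 \<bullet> A1 = 1 \<and> b2 \<bullet> A2 = 1 \<and> b2 - b1 = A1 \<times> A2"
proof
  assume H: "horizontal_line A1 b1 A2 b2"
  then have "in_Q (A1 + t *\<^sub>R (A2 - A1)) (b1 + t *\<^sub>R (b2 - b1))" for t
    unfolding horizontal_line_def by blast
  from this[of 0] this[of 1] have q: "b1 \<bullet> A1 = 1" "b2 \<bullet> A2 = 1"
    by (simp_all add: in_Q_def)
  from H have "in_D A1 b1 (A2 - A1) (b2 - b1)"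
    unfolding horizontal_line_def by (metis add_0_right scaleR_zero_left)
  then have tangent: "(b2 - b1) \<bullet> A1 + b1 \<bullet> (A2 - A1) = 0" and cross: "b2 - b1 = A1 \<times> A2"
    by (auto simp: in_D_def cross_form_eq_cross3 Cross3.right_diff_distrib)
  have "(b2 - b1) \<bullet> A1 = 0"
    unfolding cross by (simp add: dot_cross_self inner_commute)
  then have "b2 \<bullet> A1 = 1" "b1 \<bullet> A2 = 1"
    using q tangent by (simp_all add: inner_diff_left inner_diff_right)
  then show "(A1, b1) \<noteq> (A2, b2) \<and> b1 \<bullet> A1 = 1 \<and> b1 \<bullet> A2 = 1 \<and> b2 \<bullet> A1 = 1 \<and>
      b2 \<bullet> A2 = 1 \<and> b2 - b1 = A1 \<times> A2"
    using H q cross by (simp add: horizontal_line_def)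
next
  assume H: "(A1, b1) \<noteq> (A2, b2) \<and> b1 \<bullet> A1 = 1 \<and> b1 \<bullet> A2 = 1 \<and> b2 \<bullet> A1 = 1 \<and>
      b2 \<bullet> A2 = 1 \<and> b2 - b1 = A1 \<times> A2"
  then have cross: "b2 - b1 = A1 \<times> A2" by blast
  have orth: "(A1 \<times> A2) \<bullet> A1 = 0" "(A1 \<times> A2) \<bullet> A2 = 0"
    by (simp_all add: dot_cross_self inner_commute)
  show "horizontal_line A1 b1 A2 b2"
    unfolding horizontal_line_def in_Q_def in_D_def cross cross_form_eq_cross3
    using H orth
    by (simp add: inner_add_left inner_add_right inner_diff_left inner_diff_right
        cross_add_left cross_mult_left cross_skew[of A2 A1]
        Cross3.left_diff_distrib Cross3.right_diff_distrib)
qed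

lemma horizontal_line_imp_in_Q:
  "horizontal_line A1 b1 A2 b2 \<Longrightarrow> in_Q A1 b1 \<and> in_Q A2 b2"
  by (simp add: horizontal_line_iff in_Q_def)

lemma proj_eq_scaleR: "u \<noteq> 0 \<Longrightarrow> c \<noteq> 0 \<Longrightarrow> proj_eq u (c *\<^sub>R u)"
  unfolding proj_eq_def by auto

lemma cross3_neq_0_if_not_proj_eq:
  assumes "u \<noteq> 0" "v \<noteq> 0" "\<not> proj_eq u v"
  shows "u \<times> v \<noteq> 0"
proof
  assume "u \<times> v = 0"
  then have "collinear {0, u, v}"
    by (simp add: cross_eq_0)
  then obtain c where c: "v = c *\<^sub>R u"
    using assms(1,2) collinear_lemma by blast
  moreover have "c \<noteq> 0"
    using assms(2) c by auto
  ultimately show False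
    using assms unfolding proj_eq_def by blast
qed

lemma scaleR_combination_eq_0_if_not_proj_eq:
  assumes "u \<noteq> 0" "v \<noteq> 0" "\<not> proj_eq u v" "x *\<^sub>R u + y *\<^sub>R v = 0"
  shows "x = 0" "y = 0"
proof -
  have "u \<times> v \<noteq> 0"
    using assms cross3_neq_0_if_not_proj_eq by blast
  moreover have "x *\<^sub>R (u \<times> v) = 0" "y *\<^sub>R (u \<times> v) = 0"
    using arg_cong[OF assms(4), of "\<lambda>w. w \<times> v"] arg_cong[OF assms(4), of "\<lambda>w. u \<times> w"]
    by (simp_all add: cross_add_left cross_add_right cross_mult_left cross_mult_right)
  ultimately show "x = 0" "y = 0"
    by simp_all
qed

lemma scaleR_cross3_decomposition:
  "((c1 \<times> c2) \<bullet> (c1 \<times> c2)) *\<^sub>R n =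
     ((n \<times> c2) \<bullet> (c1 \<times> c2)) *\<^sub>R c1 + ((c1 \<times> n) \<bullet> (c1 \<times> c2)) *\<^sub>R c2
     + (n \<bullet> (c1 \<times> c2)) *\<^sub>R (c1 \<times> c2)"
  by (simp add: cross3_simps forall_3)

lemma in_span_if_orthogonal_cross3:
  assumes "c1 \<times> c2 \<noteq> 0" "n \<bullet> (c1 \<times> c2) = 0"
  obtains \<alpha> \<beta> where "n = \<alpha> *\<^sub>R c1 + \<beta> *\<^sub>R c2"
proof
  let ?m = "c1 \<times> c2"
  have "(?m \<bullet> ?m) *\<^sub>R n = (?m \<bullet> ?m) *\<^sub>R
      (((n \<times> c2) \<bullet> ?m / (?m \<bullet> ?m)) *\<^sub>R c1 + ((c1 \<times> n) \<bullet> ?m / (?m \<bullet> ?m)) *\<^sub>R c2)"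
    using scaleR_cross3_decomposition[of c1 c2 n] assms by (simp add: scaleR_add_right)
  then show "n = ((n \<times> c2) \<bullet> ?m / (?m \<bullet> ?m)) *\<^sub>R c1 + ((c1 \<times> n) \<bullet> ?m / (?m \<bullet> ?m)) *\<^sub>R c2"
    using assms(1) by simp
qed

lemma horizontal_line_imp_inscribed:
  assumes "horizontal_line A1 b1 A2 b2"
  shows "inscribed A1 A2 b1 b2"
proof -
  have ne: "(A1, b1) \<noteq> (A2, b2)" and q: "b1 \<bullet> A1 = 1" "b1 \<bullet> A2 = 1" "b2 \<bullet> A1 = 1"
    and cross: "b2 - b1 = A1 \<times> A2"
    using assms horizontal_line_iff by blast+
  have nz: "A1 \<noteq> 0" "A2 \<noteq> 0" "b1 \<noteq> 0" "b2 \<noteq> 0"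
    using q by auto
  have "\<not> proj_eq A1 A2"
  proof
    assume "proj_eq A1 A2"
    then obtain c where c: "A2 = c *\<^sub>R A1"
      unfolding proj_eq_def by blast
    then have "b2 = b1"
      using cross by (simp add: cross_mult_right)
    moreover have "c = 1"
      using q c by simp
    ultimately show False
      using ne c by simp
  qed
  moreover have "\<not> proj_eq b1 b2"
  proof
    assume "proj_eq b1 b2"
    then obtain c where c: "b2 = c *\<^sub>R b1"
      unfolding proj_eq_def by blast
    then have "b2 = b1"
      using q by simp
    then have "A1 \<times> A2 = 0"
      using cross by simp
    then show False
      using ne nz \<open>b2 = b1\<close> \<open>\<not> proj_eq A1 A2\<close> cross3_neq_0_if_not_proj_eq by blast
  qed
  moreover have "det3 A1 A2 X = 0" if "b1 \<bullet> X = 0" "b2 \<bullet> X = 0" for X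
    using that cross[symmetric] by (simp add: det3_eq_inner_cross3 inner_diff_left)
  ultimately show ?thesis
    unfolding inscribed_def using nz by blast
qed

lemma inscribed_imp_cross3_in_span:
  assumes "inscribed a1 a2 c1 c2"
  obtains \<alpha> \<beta> where "a1 \<times> a2 = \<alpha> *\<^sub>R c1 + \<beta> *\<^sub>R c2" "\<alpha> \<noteq> 0 \<or> \<beta> \<noteq> 0"
    "\<alpha> * (c1 \<bullet> a1) + \<beta> * (c2 \<bullet> a1) = 0" "\<alpha> * (c1 \<bullet> a2) + \<beta> * (c2 \<bullet> a2) = 0"
proof -
  have "c1 \<times> c2 \<noteq> 0"
    using assms cross3_neq_0_if_not_proj_eq unfolding inscribed_def by blast
  moreover have "c1 \<bullet> (c1 \<times> c2) = 0" "c2 \<bullet> (c1 \<times> c2) = 0"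
    by (simp_all add: dot_cross_self)
  ultimately have "(a1 \<times> a2) \<bullet> (c1 \<times> c2) = 0"
    using assms unfolding inscribed_def det3_eq_inner_cross3 by blast
  with \<open>c1 \<times> c2 \<noteq> 0\<close> obtain \<alpha> \<beta> where span: "a1 \<times> a2 = \<alpha> *\<^sub>R c1 + \<beta> *\<^sub>R c2"
    by (rule in_span_if_orthogonal_cross3)
  have "a1 \<times> a2 \<noteq> 0"
    using assms cross3_neq_0_if_not_proj_eq unfolding inscribed_def by blast
  then have "\<alpha> \<noteq> 0 \<or> \<beta> \<noteq> 0"
    using span by auto
  moreover have "(a1 \<times> a2) \<bullet> a1 = 0" "(a1 \<times> a2) \<bullet> a2 = 0"
    by (simp_all add: dot_cross_self inner_commute)
  ultimately show thesis
    using that span unfolding span by (simp add: inner_add_left)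
qed

lemma horizontal_lift_iff:
  assumes "c1 \<noteq> 0" "c2 \<noteq> 0" "\<not> proj_eq c1 c2" and span: "a1 \<times> a2 = \<alpha> *\<^sub>R c1 + \<beta> *\<^sub>R c2"
  shows "horizontal_line (t1 *\<^sub>R a1) (u1 *\<^sub>R c1) (t2 *\<^sub>R a2) (u2 *\<^sub>R c2) \<longleftrightarrow>
    (t1 *\<^sub>R a1, u1 *\<^sub>R c1) \<noteq> (t2 *\<^sub>R a2, u2 *\<^sub>R c2) \<and> u1 = - t1 * t2 * \<alpha> \<and> u2 = t1 * t2 * \<beta> \<and>
    - \<alpha> * t1\<^sup>2 * t2 * (c1 \<bullet> a1) = 1 \<and> - \<alpha> * t1 * t2\<^sup>2 * (c1 \<bullet> a2) = 1 \<and>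
    \<beta> * t1 * t2\<^sup>2 * (c2 \<bullet> a2) = 1 \<and> \<beta> * t1\<^sup>2 * t2 * (c2 \<bullet> a1) = 1"
proof -
  have "u2 *\<^sub>R c2 - u1 *\<^sub>R c1 = (t1 *\<^sub>R a1) \<times> (t2 *\<^sub>R a2) \<longleftrightarrow>
      (- u1 - t1 * t2 * \<alpha>) *\<^sub>R c1 + (u2 - t1 * t2 * \<beta>) *\<^sub>R c2 = 0"
    unfolding cross_mult_left cross_mult_right span by (auto simp: algebra_simps)
  also have "\<dots> \<longleftrightarrow> u1 = - t1 * t2 * \<alpha> \<and> u2 = t1 * t2 * \<beta>"
    using scaleR_combination_eq_0_if_not_proj_eq[OF assms(1-3)] by force
  finally show ?thesis
    unfolding horizontal_line_iff
    by (auto simp: power2_eq_square algebra_simps)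
qed

lemma cubic_system_unique_solution:
  fixes \<alpha> \<beta> p11 p12 p21 p22 :: real
  assumes rel1: "\<alpha> * p11 + \<beta> * p21 = 0" and rel2: "\<alpha> * p12 + \<beta> * p22 = 0"
    and "p11 \<noteq> 0" "p22 \<noteq> 0" "\<alpha> \<noteq> 0 \<or> \<beta> \<noteq> 0"
  shows "\<exists>!(t1, t2). - \<alpha> * t1\<^sup>2 * t2 * p11 = 1 \<and> - \<alpha> * t1 * t2\<^sup>2 * p12 = 1 \<and>
                     \<beta> * t1 * t2\<^sup>2 * p22 = 1 \<and> \<beta> * t1\<^sup>2 * t2 * p21 = 1"
proof -
  have "\<alpha> \<noteq> 0" and "p12 \<noteq> 0"
    using assms by (auto simp: add_eq_0_iff)
  define K where "K = - p12 / (\<alpha> * p11\<^sup>2)"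
  have "\<beta> * p22 = - \<alpha> * p12" "\<beta> * p21 = - \<alpha> * p11"
    using rel1 rel2 by linarith+
  then have redundant: "\<beta> * t1 * t2\<^sup>2 * p22 = - \<alpha> * t1 * t2\<^sup>2 * p12"
      "\<beta> * t1\<^sup>2 * t2 * p21 = - \<alpha> * t1\<^sup>2 * t2 * p11" for t1 t2
    by (metis mult.assoc mult.commute)+
  have reduced: "- \<alpha> * t1\<^sup>2 * t2 * p11 = 1 \<and> - \<alpha> * t1 * t2\<^sup>2 * p12 = 1
      \<longleftrightarrow> t1 ^ 3 = K \<and> t2 = t1 * p11 / p12" for t1 t2
  proof
    assume E: "- \<alpha> * t1\<^sup>2 * t2 * p11 = 1 \<and> - \<alpha> * t1 * t2\<^sup>2 * p12 = 1"
    then have "(- \<alpha> * t1 * t2) * (t1 * p11) = (- \<alpha> * t1 * t2) * (t2 * p12)"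
      "- \<alpha> * t1 * t2 \<noteq> 0"
      by (auto simp: power2_eq_square algebra_simps)
    then have t2: "t2 = t1 * p11 / p12"
      using \<open>p12 \<noteq> 0\<close> by (simp add: field_simps)
    then have "\<alpha> * p11\<^sup>2 * t1 ^ 3 = (\<alpha> * t1\<^sup>2 * t2 * p11) * p12"
      using \<open>p12 \<noteq> 0\<close> by (simp add: field_simps power2_eq_square power3_eq_cube)
    also have "\<dots> = - p12"
      using E by simp
    finally show "t1 ^ 3 = K \<and> t2 = t1 * p11 / p12"
      using t2 \<open>\<alpha> \<noteq> 0\<close> \<open>p11 \<noteq> 0\<close> unfolding K_def by (simp add: field_simps)
  next
    assume "t1 ^ 3 = K \<and> t2 = t1 * p11 / p12"
    then have t1: "t1 ^ 3 = K" and t2: "t2 * p12 = t1 * p11"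
      using \<open>p12 \<noteq> 0\<close> by auto
    have "- \<alpha> * t1\<^sup>2 * t2 * p11 = - \<alpha> * t1 ^ 3 * p11\<^sup>2 / p12"
      using t2 \<open>p12 \<noteq> 0\<close> by (simp add: field_simps power2_eq_square power3_eq_cube)
    also have "\<dots> = 1"
      unfolding t1 K_def using \<open>\<alpha> \<noteq> 0\<close> \<open>p12 \<noteq> 0\<close> \<open>p11 \<noteq> 0\<close> by (simp add: field_simps)
    finally have E1: "- \<alpha> * t1\<^sup>2 * t2 * p11 = 1" .
    have "- \<alpha> * t1 * t2\<^sup>2 * p12 = - \<alpha> * t1 * t2 * (t2 * p12)"
      by (simp add: power2_eq_square)
    also have "\<dots> = - \<alpha> * t1\<^sup>2 * t2 * p11"
      unfolding t2 by (simp add: power2_eq_square)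
    finally show "- \<alpha> * t1\<^sup>2 * t2 * p11 = 1 \<and> - \<alpha> * t1 * t2\<^sup>2 * p12 = 1"
      using E1 by argo
  qed
  have system_iff: "- \<alpha> * t1\<^sup>2 * t2 * p11 = 1 \<and> - \<alpha> * t1 * t2\<^sup>2 * p12 = 1 \<and>
      \<beta> * t1 * t2\<^sup>2 * p22 = 1 \<and> \<beta> * t1\<^sup>2 * t2 * p21 = 1
      \<longleftrightarrow> t1 ^ 3 = K \<and> t2 = t1 * p11 / p12" for t1 t2
    using redundant[of t1 t2] reduced[of t1 t2] by argo
  show ?thesis
    unfolding system_iff
    by (auto intro!: ex1I[of _ "(root 3 K, root 3 K * p11 / p12)"]
        simp: odd_real_root_pow odd_real_root_unique)
qed

lemma inscribed_imp_unique_horizontal_lift: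
  assumes ins: "inscribed a1 a2 c1 c2" and "c1 \<bullet> a1 \<noteq> 0" "c2 \<bullet> a2 \<noteq> 0"
  shows "\<exists>!(A1, b1, A2, b2). in_Q A1 b1 \<and> in_Q A2 b2 \<and>
           proj_eq a1 A1 \<and> proj_eq a2 A2 \<and> proj_eq c1 b1 \<and> proj_eq c2 b2 \<and>
           horizontal_line A1 b1 A2 b2"
proof -
  have nz: "a1 \<noteq> 0" "a2 \<noteq> 0" "c1 \<noteq> 0" "c2 \<noteq> 0" and pa: "\<not> proj_eq a1 a2"
    and pc: "\<not> proj_eq c1 c2"
    using ins unfolding inscribed_def by blast+
  obtain \<alpha> \<beta> where span: "a1 \<times> a2 = \<alpha> *\<^sub>R c1 + \<beta> *\<^sub>R c2"
    and rels: "\<alpha> \<noteq> 0 \<or> \<beta> \<noteq> 0" "\<alpha> * (c1 \<bullet> a1) + \<beta> * (c2 \<bullet> a1) = 0"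
      "\<alpha> * (c1 \<bullet> a2) + \<beta> * (c2 \<bullet> a2) = 0"
    using ins by (rule inscribed_imp_cross3_in_span)
  note lift_iff = horizontal_lift_iff[OF nz(3,4) pc span]
  obtain s1 s2 where sol: "- \<alpha> * s1\<^sup>2 * s2 * (c1 \<bullet> a1) = 1 \<and>
      - \<alpha> * s1 * s2\<^sup>2 * (c1 \<bullet> a2) = 1 \<and> \<beta> * s1 * s2\<^sup>2 * (c2 \<bullet> a2) = 1 \<and>
      \<beta> * s1\<^sup>2 * s2 * (c2 \<bullet> a1) = 1"
    and sol_unique: "\<And>t1 t2. - \<alpha> * t1\<^sup>2 * t2 * (c1 \<bullet> a1) = 1 \<and>
      - \<alpha> * t1 * t2\<^sup>2 * (c1 \<bullet> a2) = 1 \<and> \<beta> * t1 * t2\<^sup>2 * (c2 \<bullet> a2) = 1 \<and>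
      \<beta> * t1\<^sup>2 * t2 * (c2 \<bullet> a1) = 1 \<Longrightarrow> t1 = s1 \<and> t2 = s2"
    using cubic_system_unique_solution[of \<alpha> "c1 \<bullet> a1" \<beta> "c2 \<bullet> a1" "c1 \<bullet> a2" "c2 \<bullet> a2"] rels assms
    unfolding Ex1_def split_paired_All split_paired_Ex case_prod_conv by blast
  let ?lift = "(s1 *\<^sub>R a1, (- s1 * s2 * \<alpha>) *\<^sub>R c1, s2 *\<^sub>R a2, (s1 * s2 * \<beta>) *\<^sub>R c2)"
  have "s1 \<noteq> 0" "s2 \<noteq> 0" "\<alpha> \<noteq> 0" "\<beta> \<noteq> 0"
    using sol by auto
  have "s1 *\<^sub>R a1 \<noteq> s2 *\<^sub>R a2"
    using scaleR_combination_eq_0_if_not_proj_eq(1)[OF nz(1,2) pa, of s1 "- s2"] \<open>s1 \<noteq> 0\<close>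
    by auto
  then have hor: "horizontal_line (s1 *\<^sub>R a1) ((- s1 * s2 * \<alpha>) *\<^sub>R c1) (s2 *\<^sub>R a2) ((s1 * s2 * \<beta>) *\<^sub>R c2)"
    unfolding lift_iff using sol by simp
  have lift: "case ?lift of (A1, b1, A2, b2) \<Rightarrow> in_Q A1 b1 \<and> in_Q A2 b2 \<and>
      proj_eq a1 A1 \<and> proj_eq a2 A2 \<and> proj_eq c1 b1 \<and> proj_eq c2 b2 \<and> horizontal_line A1 b1 A2 b2"
    unfolding prod.case using hor horizontal_line_imp_in_Q[OF hor]
    by (intro conjI proj_eq_scaleR) (simp_all add: nz \<open>s1 \<noteq> 0\<close> \<open>s2 \<noteq> 0\<close> \<open>\<alpha> \<noteq> 0\<close> \<open>\<beta> \<noteq> 0\<close>)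
  have "(A1, b1, A2, b2) = ?lift"
    if reps: "proj_eq a1 A1" "proj_eq a2 A2" "proj_eq c1 b1" "proj_eq c2 b2"
      and "horizontal_line A1 b1 A2 b2"
    for A1 b1 A2 b2
  proof -
    obtain t1 t2 u1 u2 where reps_eq:
      "A1 = t1 *\<^sub>R a1" "A2 = t2 *\<^sub>R a2" "b1 = u1 *\<^sub>R c1" "b2 = u2 *\<^sub>R c2"
      using reps unfolding proj_eq_def by metis
    with \<open>horizontal_line A1 b1 A2 b2\<close>
    have "horizontal_line (t1 *\<^sub>R a1) (u1 *\<^sub>R c1) (t2 *\<^sub>R a2) (u2 *\<^sub>R c2)"
      by simp
    then have "u1 = - t1 * t2 * \<alpha>" "u2 = t1 * t2 * \<beta>" "t1 = s1 \<and> t2 = s2"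
      using sol_unique unfolding lift_iff by blast+
    with reps_eq show ?thesis
      by simp
  qed
  with lift show ?thesis
    by (intro ex1I[of _ ?lift]) auto
qed

theorem lemma1:
  shows "(\<forall>A1 b1 A2 b2. in_Q A1 b1 \<and> in_Q A2 b2 \<and> (A1, b1) \<noteq> (A2, b2) \<and>
            horizontal_line A1 b1 A2 b2 \<longrightarrow> inscribed A1 A2 b1 b2) \<and>
         (\<forall>a1 a2 c1 c2. inscribed a1 a2 c1 c2 \<and> c1 \<bullet> a1 \<noteq> 0 \<and> c2 \<bullet> a2 \<noteq> 0 \<longrightarrow>
            (\<exists>!(A1, b1, A2, b2). in_Q A1 b1 \<and> in_Q A2 b2 \<and>
                proj_eq a1 A1 \<and> proj_eq a2 A2 \<and> proj_eq c1 b1 \<and> proj_eq c2 b2 \<and>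
                horizontal_line A1 b1 A2 b2))"
  using horizontal_line_imp_inscribed inscribed_imp_unique_horizontal_lift by blast

end
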